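(* Let $E$ be an ordered Banach space, $I$ an interval, and $f:I\rightarrow E$ a continuous function which is three times differentiable on the interior of $I$. Then $f$ is $3$-convex if and only if $f'''(t)\geq0$ (i.e. $f'''(t)\in E_+$) for all $t$ in the interior of $I$.
   Context: An ordered Banach space is a Banach space $E$ with a closed convex cone $E_+$ such that $E=E_+-E_+$, $(-E_+)\cap E_+=\{0\}$, ordered by $x\leq y$ iff $y-x\in E_+$, and such that $0\leq x\leq y$ implies $\|x\|\leq\|y\|$. A function $f:I\rightarrow E$ is $3$-convex if for all $x_0<x_1<x_2<x_3$ in $I$ the divided difference $[x_0,x_1,x_2,x_3;f]=\sum_{j=0}^{3}\frac{f(x_j)}{\prod_{k\neq j}(x_j-x_k)}$ belongs to $E_+$. Derivatives are taken in the norm of $E$. *)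

theory Defs
  imports "HOL-Analysis.Analysis"
begin

text \<open>An ordered Banach space: a Banach space together with a positive cone P
  (closed, convex, cone, generating, proper) such that the norm is monotone on P.
  The order is x \<le> y iff y - x \<in> P.\<close>
definition ordered_banach_cone :: "'a::banach set \<Rightarrow> bool" where
  "ordered_banach_cone P \<longleftrightarrow>
     closed P \<and> convex P \<and> cone P \<and>
     (\<forall>x. \<exists>a\<in>P. \<exists>b\<in>P. x = a - b) \<and>
     P \<inter> uminus ` P = {0} \<and>
     (\<forall>x y. x \<in> P \<and> y - x \<in> P \<longrightarrow> norm x \<le> norm y)"

definition divdiff3 :: "(real \<Rightarrow> 'a::real_vector) \<Rightarrow> real \<Rightarrow> real \<Rightarrow> real \<Rightarrow> real \<Rightarrow> 'a" where
  "divdiff3 f x0 x1 x2 x3 =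
     (1 / ((x0 - x1) * (x0 - x2) * (x0 - x3))) *\<^sub>R f x0 +
     (1 / ((x1 - x0) * (x1 - x2) * (x1 - x3))) *\<^sub>R f x1 +
     (1 / ((x2 - x0) * (x2 - x1) * (x2 - x3))) *\<^sub>R f x2 +
     (1 / ((x3 - x0) * (x3 - x1) * (x3 - x2))) *\<^sub>R f x3"

definition three_convex_on :: "'a::real_vector set \<Rightarrow> real set \<Rightarrow> (real \<Rightarrow> 'a) \<Rightarrow> bool" where
  "three_convex_on P I f \<longleftrightarrow>
     (\<forall>x0 x1 x2 x3. x0 \<in> I \<and> x1 \<in> I \<and> x2 \<in> I \<and> x3 \<in> I \<and> x0 < x1 \<and> x1 < x2 \<and> x2 < x3
        \<longrightarrow> divdiff3 f x0 x1 x2 x3 \<in> P)"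

end

theory Submission
  imports Defs
begin

(*
  Forward direction: shifting all nodes of a divided difference of order k by h changes it by
  h times a sum of divided differences of order k + 1. Dividing by h and letting h tend to 0
  turns nonnegative third divided differences of f into nonnegative second divided differences
  of f', these into nonnegative first divided differences of f'', and those into f''' >= 0.

  Backward direction (Peano kernel): the third divided difference of f equals that of the
  second-order Taylor remainder R a of f, and a combination of such remainders has, as a
  function of the base point a, derivative f''' a times a nonnegative quadratic kernel. A
  cone-valued mean value theorem, proved by a creeping argument on the distance to the closed
  cone, makes the increment nonnegative; endpoints of I are reached by continuity.
*)

definition divdiff1 :: "(real \<Rightarrow> 'a::real_vector) \<Rightarrow> real \<Rightarrow> real \<Rightarrow> 'a" where
  "divdiff1 f x0 x1 = (1 / (x0 - x1)) *\<^sub>R f x0 + (1 / (x1 - x0)) *\<^sub>R f x1"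

definition divdiff2 :: "(real \<Rightarrow> 'a::real_vector) \<Rightarrow> real \<Rightarrow> real \<Rightarrow> real \<Rightarrow> 'a" where
  "divdiff2 f x0 x1 x2 =
     (1 / ((x0 - x1) * (x0 - x2))) *\<^sub>R f x0 +
     (1 / ((x1 - x0) * (x1 - x2))) *\<^sub>R f x1 +
     (1 / ((x2 - x0) * (x2 - x1))) *\<^sub>R f x2"

lemma divdiff2_recurrence:
  assumes "distinct [a, b, c]"
  shows "(b - a) *\<^sub>R divdiff2 f a b c = divdiff1 f b c - divdiff1 f a c"
proof -
  have "(b - a) / ((a - b) * (a - c)) = - (1 / (a - c))"
    "(b - a) / ((b - a) * (b - c)) = 1 / (b - c)"
    "(b - a) / ((c - a) * (c - b)) = 1 / (c - b) - 1 / (c - a)"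
    using assms by (auto simp: divide_simps; simp add: algebra_simps)+
  then have "(b - a) *\<^sub>R divdiff2 f a b c = (- (1 / (a - c))) *\<^sub>R f a + (1 / (b - c)) *\<^sub>R f b
      + (1 / (c - b) - 1 / (c - a)) *\<^sub>R f c"
    by (simp add: divdiff2_def scaleR_add_right)
  also have "\<dots> = divdiff1 f b c - divdiff1 f a c"
    by (simp add: divdiff1_def algebra_simps)
  finally show ?thesis .
qed

lemma divdiff3_recurrence:
  assumes "distinct [a, b, c, d]"
  shows "(b - a) *\<^sub>R divdiff3 f a b c d = divdiff2 f b c d - divdiff2 f a c d"
proof -
  have "(b - a) / ((a - b) * (a - c) * (a - d)) = - (1 / ((a - c) * (a - d)))"
    "(b - a) / ((b - a) * (b - c) * (b - d)) = 1 / ((b - c) * (b - d))"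
    "(b - a) / ((c - a) * (c - b) * (c - d)) = 1 / ((c - b) * (c - d)) - 1 / ((c - a) * (c - d))"
    "(b - a) / ((d - a) * (d - b) * (d - c)) = 1 / ((d - b) * (d - c)) - 1 / ((d - a) * (d - c))"
    using assms by (auto simp: divide_simps; simp add: algebra_simps)+
  then have "(b - a) *\<^sub>R divdiff3 f a b c d =
      (- (1 / ((a - c) * (a - d)))) *\<^sub>R f a + (1 / ((b - c) * (b - d))) *\<^sub>R f b
      + (1 / ((c - b) * (c - d)) - 1 / ((c - a) * (c - d))) *\<^sub>R f c
      + (1 / ((d - b) * (d - c)) - 1 / ((d - a) * (d - c))) *\<^sub>R f d"
    by (simp add: divdiff3_def scaleR_add_right)
  also have "\<dots> = divdiff2 f b c d - divdiff2 f a c d"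
    by (simp add: divdiff2_def algebra_simps)
  finally show ?thesis .
qed

lemma divdiff2_quadratic:
  fixes \<alpha> \<beta> \<gamma> :: real
  assumes "distinct [x0, x1, x2]"
  shows "divdiff2 (\<lambda>t. \<alpha> + \<beta> * t + \<gamma> * t\<^sup>2) x0 x1 x2 = \<gamma>"
  using assms unfolding divdiff2_def
  by (simp add: divide_simps) (simp add: algebra_simps power2_eq_square)

lemma divdiff3_quadratic:
  fixes \<alpha> \<beta> \<gamma> :: real
  assumes "distinct [x0, x1, x2, x3]"
  shows "divdiff3 (\<lambda>t. \<alpha> + \<beta> * t + \<gamma> * t\<^sup>2) x0 x1 x2 x3 = 0"
proof -
  let ?q = "\<lambda>t. \<alpha> + \<beta> * t + \<gamma> * t\<^sup>2"
  have "(x1 - x0) * divdiff3 ?q x0 x1 x2 x3 = \<gamma> - \<gamma>"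
    using divdiff3_recurrence[OF assms, of ?q] assms by (simp add: divdiff2_quadratic)
  then show ?thesis
    using assms by simp
qed

lemma divdiff3_diff:
  "divdiff3 (\<lambda>t. f t - g t) x0 x1 x2 x3 = divdiff3 f x0 x1 x2 x3 - divdiff3 g x0 x1 x2 x3"
  by (simp add: divdiff3_def algebra_simps)

lemma divdiff3_scaleR_left:
  "divdiff3 (\<lambda>t. q t *\<^sub>R v) x0 x1 x2 x3 = divdiff3 q x0 x1 x2 x3 *\<^sub>R v"
  by (simp add: divdiff3_def algebra_simps)

lemma divdiff1_shift:
  assumes "0 < h" "z0 + h < z1"
  shows "divdiff1 g (z0 + h) (z1 + h) - divdiff1 g z0 z1 =
    h *\<^sub>R (divdiff2 g z0 (z0 + h) z1 + divdiff2 g (z0 + h) z1 (z1 + h))"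
proof -
  have "h *\<^sub>R divdiff2 g z0 (z0 + h) z1 = divdiff1 g (z0 + h) z1 - divdiff1 g z0 z1"
    using divdiff2_recurrence[of z0 "z0 + h" z1 g] assms by simp
  moreover have "h *\<^sub>R divdiff2 g z1 (z1 + h) (z0 + h)
      = divdiff1 g (z1 + h) (z0 + h) - divdiff1 g z1 (z0 + h)"
    using divdiff2_recurrence[of z1 "z1 + h" "z0 + h" g] assms by simp
  moreover have "divdiff2 g z1 (z1 + h) (z0 + h) = divdiff2 g (z0 + h) z1 (z1 + h)"
    "divdiff1 g (z1 + h) (z0 + h) = divdiff1 g (z0 + h) (z1 + h)"
    "divdiff1 g z1 (z0 + h) = divdiff1 g (z0 + h) z1"
    by (simp_all add: divdiff1_def divdiff2_def ac_simps)
  ultimately show ?thesis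
    by (simp add: scaleR_add_right)
qed

lemma divdiff2_shift:
  assumes "0 < h" "y0 + h < y1" "y1 + h < y2"
  shows "divdiff2 g (y0 + h) (y1 + h) (y2 + h) - divdiff2 g y0 y1 y2 =
    h *\<^sub>R (divdiff3 g y0 (y0 + h) y1 y2 + divdiff3 g (y0 + h) y1 (y1 + h) y2
      + divdiff3 g (y0 + h) (y1 + h) y2 (y2 + h))"
proof -
  have "h *\<^sub>R divdiff3 g y0 (y0 + h) y1 y2 = divdiff2 g (y0 + h) y1 y2 - divdiff2 g y0 y1 y2"
    using divdiff3_recurrence[of y0 "y0 + h" y1 y2 g] assms by simp
  moreover have "h *\<^sub>R divdiff3 g y1 (y1 + h) (y0 + h) y2
      = divdiff2 g (y1 + h) (y0 + h) y2 - divdiff2 g y1 (y0 + h) y2"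
    using divdiff3_recurrence[of y1 "y1 + h" "y0 + h" y2 g] assms by simp
  moreover have "h *\<^sub>R divdiff3 g y2 (y2 + h) (y0 + h) (y1 + h)
      = divdiff2 g (y2 + h) (y0 + h) (y1 + h) - divdiff2 g y2 (y0 + h) (y1 + h)"
    using divdiff3_recurrence[of y2 "y2 + h" "y0 + h" "y1 + h" g] assms by simp
  moreover have "divdiff3 g y1 (y1 + h) (y0 + h) y2 = divdiff3 g (y0 + h) y1 (y1 + h) y2"
    "divdiff3 g y2 (y2 + h) (y0 + h) (y1 + h) = divdiff3 g (y0 + h) (y1 + h) y2 (y2 + h)"
    "divdiff2 g (y1 + h) (y0 + h) y2 = divdiff2 g (y0 + h) (y1 + h) y2"
    "divdiff2 g y1 (y0 + h) y2 = divdiff2 g (y0 + h) y1 y2"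
    "divdiff2 g (y2 + h) (y0 + h) (y1 + h) = divdiff2 g (y0 + h) (y1 + h) (y2 + h)"
    "divdiff2 g y2 (y0 + h) (y1 + h) = divdiff2 g (y0 + h) (y1 + h) y2"
    by (simp_all add: divdiff2_def divdiff3_def ac_simps)
  ultimately show ?thesis
    by (simp add: scaleR_add_right)
qed

lemma has_vector_derivative_right_quotient:
  fixes g :: "real \<Rightarrow> 'a::real_normed_vector"
  assumes "(g has_vector_derivative v) (at x)"
  shows "((\<lambda>h. (1 / h) *\<^sub>R (g (x + h) - g x)) \<longlongrightarrow> v) (at_right 0)"
proof -
  have "((\<lambda>h. norm (g (x + h) - g x - h *\<^sub>R v) / norm h) \<longlongrightarrow> 0) (at 0)"
    using assms by (simp add: has_vector_derivative_def has_derivative_at)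
  moreover have "norm (g (x + h) - g x - h *\<^sub>R v) / norm h = norm ((1 / h) *\<^sub>R (g (x + h) - g x) - v)"
    if "h \<noteq> 0" for h
  proof -
    have "(1 / h) *\<^sub>R (g (x + h) - g x) - v = (1 / h) *\<^sub>R (g (x + h) - g x - h *\<^sub>R v)"
      using that by (simp add: algebra_simps)
    then show ?thesis
      by (simp add: divide_inverse mult.commute)
  qed
  then have "eventually (\<lambda>h. norm (g (x + h) - g x - h *\<^sub>R v) / norm h
      = norm ((1 / h) *\<^sub>R (g (x + h) - g x) - v)) (at 0)"
    by (simp add: eventually_at_filter)
  ultimately have "((\<lambda>h. norm ((1 / h) *\<^sub>R (g (x + h) - g x) - v)) \<longlongrightarrow> 0) (at 0)"
    by (rule Lim_transform_eventually)
  then have "((\<lambda>h. (1 / h) *\<^sub>R (g (x + h) - g x)) \<longlongrightarrow> v) (at 0)"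
    by (simp add: tendsto_norm_zero_iff LIM_zero_iff)
  then show ?thesis
    using tendsto_mono at_within_le_at by blast
qed

lemma divdiff1_shift_quotient_tendsto:
  assumes "(g has_vector_derivative g' z0) (at z0)" "(g has_vector_derivative g' z1) (at z1)"
  shows "((\<lambda>h. (1 / h) *\<^sub>R (divdiff1 g (z0 + h) (z1 + h) - divdiff1 g z0 z1))
    \<longlongrightarrow> divdiff1 g' z0 z1) (at_right 0)"
proof -
  have "(1 / h) *\<^sub>R (divdiff1 g (z0 + h) (z1 + h) - divdiff1 g z0 z1) =
    (1 / (z0 - z1)) *\<^sub>R ((1 / h) *\<^sub>R (g (z0 + h) - g z0))
    + (1 / (z1 - z0)) *\<^sub>R ((1 / h) *\<^sub>R (g (z1 + h) - g z1))" for h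
    by (simp add: divdiff1_def algebra_simps)
  then show ?thesis
    unfolding divdiff1_def
    by (simp only:) (intro tendsto_intros has_vector_derivative_right_quotient assms)
qed

lemma divdiff2_shift_quotient_tendsto:
  assumes "(g has_vector_derivative g' y0) (at y0)" "(g has_vector_derivative g' y1) (at y1)"
    "(g has_vector_derivative g' y2) (at y2)"
  shows "((\<lambda>h. (1 / h) *\<^sub>R (divdiff2 g (y0 + h) (y1 + h) (y2 + h) - divdiff2 g y0 y1 y2))
    \<longlongrightarrow> divdiff2 g' y0 y1 y2) (at_right 0)"
proof -
  have "(1 / h) *\<^sub>R (divdiff2 g (y0 + h) (y1 + h) (y2 + h) - divdiff2 g y0 y1 y2) =
    (1 / ((y0 - y1) * (y0 - y2))) *\<^sub>R ((1 / h) *\<^sub>R (g (y0 + h) - g y0))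
    + (1 / ((y1 - y0) * (y1 - y2))) *\<^sub>R ((1 / h) *\<^sub>R (g (y1 + h) - g y1))
    + (1 / ((y2 - y0) * (y2 - y1))) *\<^sub>R ((1 / h) *\<^sub>R (g (y2 + h) - g y2))" for h
    by (simp add: divdiff2_def algebra_simps)
  then show ?thesis
    unfolding divdiff2_def
    by (simp only:) (intro tendsto_intros has_vector_derivative_right_quotient assms)
qed

definition taylor2_remainder ::
    "(real \<Rightarrow> 'a::real_vector) \<Rightarrow> (real \<Rightarrow> 'a) \<Rightarrow> (real \<Rightarrow> 'a) \<Rightarrow> real \<Rightarrow> real \<Rightarrow> 'a" where
  "taylor2_remainder f f1 f2 a t = f t - f a - (t - a) *\<^sub>R f1 a - ((t - a)\<^sup>2 / 2) *\<^sub>R f2 a"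

lemma taylor2_remainder_self [simp]: "taylor2_remainder f f1 f2 a a = 0"
  by (simp add: taylor2_remainder_def)

lemma has_vector_derivative_taylor2_remainder:
  assumes "(f has_vector_derivative f1 a) (at a)" "(f1 has_vector_derivative f2 a) (at a)"
    "(f2 has_vector_derivative f3 a) (at a)"
  shows "((\<lambda>a. taylor2_remainder f f1 f2 a t) has_vector_derivative
    - (((t - a)\<^sup>2 / 2) *\<^sub>R f3 a)) (at a)"
proof -
  have "((\<lambda>a. f t - f a - (t - a) *\<^sub>R f1 a - ((t - a)\<^sup>2 / 2) *\<^sub>R f2 a) has_vector_derivative
     (0 - f1 a - ((t - a) *\<^sub>R f2 a + (- 1) *\<^sub>R f1 a)
      - (((t - a)\<^sup>2 / 2) *\<^sub>R f3 a + (- (t - a)) *\<^sub>R f2 a))) (at a)"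
    by (intro has_vector_derivative_diff has_vector_derivative_const has_vector_derivative_scaleR
        assms derivative_eq_intros) auto
  then show ?thesis
    unfolding taylor2_remainder_def by (simp add: algebra_simps)
qed

lemma divdiff3_taylor2_remainder:
  assumes "distinct [x0, x1, x2, x3]"
  shows "divdiff3 (taylor2_remainder f f1 f2 a) x0 x1 x2 x3 = divdiff3 f x0 x1 x2 x3"
proof -
  have "1 + 0 * t + 0 * t\<^sup>2 = 1" "- a + 1 * t + 0 * t\<^sup>2 = t - a"
    "a\<^sup>2 / 2 + (- a) * t + (1 / 2) * t\<^sup>2 = (t - a)\<^sup>2 / 2" for t
    by (simp_all add: power2_eq_square field_simps)
  then have "taylor2_remainder f f1 f2 a = (\<lambda>t. f t - (1 + 0 * t + 0 * t\<^sup>2) *\<^sub>R f a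
      - (- a + 1 * t + 0 * t\<^sup>2) *\<^sub>R f1 a - (a\<^sup>2 / 2 + (- a) * t + (1 / 2) * t\<^sup>2) *\<^sub>R f2 a)"
    by (simp only:) (simp add: fun_eq_iff taylor2_remainder_def)
  then show ?thesis
    using assms by (simp only: divdiff3_diff divdiff3_scaleR_left divdiff3_quadratic) simp
qed

lemma divdiff3_kernel_left_nonneg:
  fixes x0 x1 x2 x3 a :: real
  assumes "x0 < x1" "x1 < x2" "x2 < x3"
  shows "0 \<le> 1 / ((x1 - x0) * (x1 - x2) * (x1 - x3)) * (x1 - a)\<^sup>2
    + 1 / ((x2 - x0) * (x2 - x1) * (x2 - x3)) * (x2 - a)\<^sup>2
    + 1 / ((x3 - x0) * (x3 - x1) * (x3 - x2)) * (x3 - a)\<^sup>2"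
proof -
  have "(x0 - x1) * (x0 - x2) * (x0 - x3) < 0"
    using assms by (intro mult_pos_neg mult_neg_neg) auto
  then have "1 / ((x0 - x1) * (x0 - x2) * (x0 - x3)) * (x0 - a)\<^sup>2 \<le> 0"
    by (simp add: divide_nonneg_neg)
  moreover have "(\<lambda>t. (t - a)\<^sup>2) = (\<lambda>t. a\<^sup>2 + (- 2 * a) * t + 1 * t\<^sup>2)"
    by (auto simp: fun_eq_iff power2_eq_square algebra_simps)
  then have "divdiff3 (\<lambda>t. (t - a)\<^sup>2) x0 x1 x2 x3 = 0"
    using assms by (simp only:) (intro divdiff3_quadratic, auto)
  ultimately show ?thesis
    unfolding divdiff3_def by simp
qed

lemma divdiff3_kernel_middle_nonneg:
  fixes x0 x1 x2 x3 a :: real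
  assumes "x0 < x1" "x1 < x2" "x2 < x3" "x1 \<le> a" "a \<le> x2"
  shows "0 \<le> 1 / ((x2 - x0) * (x2 - x1) * (x2 - x3)) * (x2 - a)\<^sup>2
    + 1 / ((x3 - x0) * (x3 - x1) * (x3 - x2)) * (x3 - a)\<^sup>2"
proof -
  have "(x2 - a) * (x3 - x) \<le> (x3 - a) * (x2 - x)" if "x \<le> a" for x
  proof -
    have "(x3 - a) * (x2 - x) - (x2 - a) * (x3 - x) = (x3 - x2) * (a - x)"
      by (simp add: algebra_simps)
    moreover have "0 \<le> (x3 - x2) * (a - x)"
      using that assms by simp
    ultimately show ?thesis
      by linarith
  qed
  then have "(x2 - a) / (x2 - x0) \<le> (x3 - a) / (x3 - x0)"
    "(x2 - a) / (x2 - x1) \<le> (x3 - a) / (x3 - x1)"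
    using assms by (simp_all add: divide_simps)
  then have le: "(x2 - a) / (x2 - x0) * ((x2 - a) / (x2 - x1))
      \<le> (x3 - a) / (x3 - x0) * ((x3 - a) / (x3 - x1))"
    using assms by (intro mult_mono) auto
  have c2: "1 / ((x2 - x0) * (x2 - x1) * (x2 - x3)) * (x2 - a)\<^sup>2
      = - ((x2 - a) / (x2 - x0) * ((x2 - a) / (x2 - x1))) / (x3 - x2)"
    using assms by (simp add: divide_simps power2_eq_square) (simp add: algebra_simps)
  have c3: "1 / ((x3 - x0) * (x3 - x1) * (x3 - x2)) * (x3 - a)\<^sup>2
      = ((x3 - a) / (x3 - x0) * ((x3 - a) / (x3 - x1))) / (x3 - x2)"
    using assms by (simp add: divide_simps power2_eq_square)
  show ?thesis
    unfolding c2 c3 using le assms by (simp add: divide_simps)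
qed

lemma is_interval_1_between:
  "is_interval S \<Longrightarrow> a \<in> S \<Longrightarrow> b \<in> S \<Longrightarrow> a \<le> t \<Longrightarrow> t \<le> b \<Longrightarrow> t \<in> (S :: real set)"
  unfolding is_interval_1 by blast

context
  fixes P :: "'a::banach set"
  assumes cone: "ordered_banach_cone P"
begin

lemma ordered_cone_closed: "closed P"
  using cone by (simp add: ordered_banach_cone_def)

lemma ordered_cone_zero: "0 \<in> P"
  using cone by (auto simp: ordered_banach_cone_def)

lemma ordered_cone_add: "x \<in> P \<Longrightarrow> y \<in> P \<Longrightarrow> x + y \<in> P"
  using cone convex_cone by (auto simp: ordered_banach_cone_def)

lemma ordered_cone_scaleR: "x \<in> P \<Longrightarrow> 0 \<le> c \<Longrightarrow> c *\<^sub>R x \<in> P"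
  using cone by (auto simp: ordered_banach_cone_def cone_def)

lemma ordered_cone_tendsto:
  "eventually (\<lambda>h. F h \<in> P) (at_right a) \<Longrightarrow> (F \<longlongrightarrow> L) (at_right (a::real)) \<Longrightarrow> L \<in> P"
  by (rule Lim_in_closed_set[OF ordered_cone_closed]) simp_all

lemma infdist_add_cone_le:
  assumes "q \<in> P"
  shows "infdist (x + q) P \<le> infdist x P"
proof -
  have "infdist (x + q) P \<le> dist x p" if "p \<in> P" for p
  proof -
    have "infdist (x + q) P \<le> dist (x + q) (p + q)"
      using that assms by (intro infdist_le ordered_cone_add)
    then show ?thesis
      by (simp add: dist_norm)
  qed
  moreover have "P \<noteq> {}"
    using ordered_cone_zero by auto
  ultimately show ?thesis
    by (simp add: infdist_notempty[of P x] cINF_greatest)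
qed

text \<open>The set of \<open>t\<close> with \<open>infdist (g t - g c) P \<le> e (t - c)\<close> is closed, and since
  \<open>g' \<in> P\<close> the linear approximation of \<open>g\<close> pushes it past each of its points below \<open>d\<close>.\<close>
lemma infdist_increment_le:
  fixes g g' :: "real \<Rightarrow> 'a"
  assumes "c \<le> d" "continuous_on {c..d} g"
    and der: "\<And>t. c \<le> t \<Longrightarrow> t < d \<Longrightarrow> (g has_vector_derivative g' t) (at t)"
    and pos: "\<And>t. c \<le> t \<Longrightarrow> t < d \<Longrightarrow> g' t \<in> P"
    and "e > 0"
  shows "infdist (g d - g c) P \<le> e * (d - c)"
proof -
  define S where "S = {t \<in> {c..d}. infdist (g t - g c) P \<le> e * (t - c)}"
  have "closed S"
    unfolding S_def by (intro continuous_on_closed_Collect_le continuous_intros assms)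
  moreover have "c \<in> S" "bdd_above S"
    using \<open>c \<le> d\<close> ordered_cone_zero by (auto simp: S_def intro: bdd_aboveI[of _ d])
  ultimately have "Sup S \<in> S"
    using closed_contains_Sup by blast
  define s where "s = Sup S"
  have "s = d"
  proof (rule ccontr)
    assume "s \<noteq> d"
    then have s: "c \<le> s" "s < d"
      using \<open>Sup S \<in> S\<close> by (auto simp: s_def S_def)
    obtain \<delta> where "\<delta> > 0" and \<delta>:
      "\<And>y. norm (y - s) < \<delta> \<Longrightarrow> norm (g y - g s - (y - s) *\<^sub>R g' s) \<le> e * norm (y - s)"
      using der[OF s] \<open>e > 0\<close> unfolding has_vector_derivative_def has_derivative_at_alt by blast
    define h where "h = min (\<delta> / 2) ((d - s) / 2)"
    have h: "0 < h" "h < \<delta>" "s + h \<le> d"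
      using \<open>\<delta> > 0\<close> s by (auto simp: h_def min_def field_simps)
    define r where "r = g (s + h) - g s - h *\<^sub>R g' s"
    have "infdist (g (s + h) - g c) P = infdist ((g s - g c) + r + h *\<^sub>R g' s) P"
      by (simp add: r_def algebra_simps)
    also have "\<dots> \<le> infdist ((g s - g c) + r) P"
      using h pos[OF s] by (intro infdist_add_cone_le ordered_cone_scaleR) auto
    also have "\<dots> \<le> infdist (g s - g c) P + norm r"
      using infdist_triangle[of "(g s - g c) + r" P "g s - g c"] by (simp add: dist_norm)
    also have "\<dots> \<le> e * (s - c) + e * h"
      using \<open>Sup S \<in> S\<close> \<delta>[of "s + h"] h by (auto simp: S_def s_def r_def intro: add_mono)
    finally have "s + h \<in> S"
      using h s by (simp add: S_def algebra_simps)
    then have "s + h \<le> s"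
      unfolding s_def using \<open>bdd_above S\<close> by (rule cSup_upper)
    then show False
      using h by simp
  qed
  then show ?thesis
    using \<open>Sup S \<in> S\<close> by (simp add: S_def s_def)
qed

lemma increment_in_cone_halfopen:
  fixes g g' :: "real \<Rightarrow> 'a"
  assumes "c \<le> d" "continuous_on {c..d} g"
    and "\<And>t. c \<le> t \<Longrightarrow> t < d \<Longrightarrow> (g has_vector_derivative g' t) (at t)"
    and "\<And>t. c \<le> t \<Longrightarrow> t < d \<Longrightarrow> g' t \<in> P"
  shows "g d - g c \<in> P"
proof -
  have "infdist (g d - g c) P = 0"
  proof (cases "c = d")
    case False
    then have "d - c > 0"
      using \<open>c \<le> d\<close> by simp
    have "infdist (g d - g c) P \<le> 0"
    proof (rule field_le_epsilon)
      fix e :: real assume "e > 0"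
      then show "infdist (g d - g c) P \<le> 0 + e"
        using infdist_increment_le[OF assms, of "e / (d - c)"] \<open>d - c > 0\<close> by simp
    qed
    then show ?thesis
      using infdist_nonneg by (rule antisym)
  qed (simp add: ordered_cone_zero)
  then show ?thesis
    using in_closure_iff_infdist_zero[of P] ordered_cone_zero ordered_cone_closed by auto
qed

lemma increment_in_cone:
  fixes g g' :: "real \<Rightarrow> 'a"
  assumes "a < b" "continuous_on {a..b} g"
    and der: "\<And>t. a < t \<Longrightarrow> t < b \<Longrightarrow> (g has_vector_derivative g' t) (at t)"
    and pos: "\<And>t. a < t \<Longrightarrow> t < b \<Longrightarrow> g' t \<in> P"
  shows "g b - g a \<in> P"
proof (rule ordered_cone_tendsto)
  have near: "eventually (\<lambda>c. a < c \<and> c < b) (at_right a)"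
    using \<open>a < b\<close> by (auto simp: eventually_at_right_field)
  then show "eventually (\<lambda>c. g b - g c \<in> P) (at_right a)"
  proof eventually_elim
    case (elim c)
    then show ?case
      using continuous_on_subset[OF assms(2)] der pos
      by (intro increment_in_cone_halfopen[of c b g g']) auto
  qed
  have "(g \<longlongrightarrow> g a) (at_right a)"
    using near \<open>a < b\<close>
    by (intro continuous_on_tendsto_compose[OF assms(2) tendsto_ident_at])
      (auto elim: eventually_mono)
  then show "((\<lambda>c. g b - g c) \<longlongrightarrow> g b - g a) (at_right a)"
    by (intro tendsto_diff tendsto_const)
qed

lemma taylor2_remainder_combination_increment:
  fixes f f1 f2 f3 :: "real \<Rightarrow> 'a"
  assumes "p < q"
    and "\<And>t. t \<in> {p..q} \<Longrightarrow> (f has_vector_derivative f1 t) (at t)"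
    and "\<And>t. t \<in> {p..q} \<Longrightarrow> (f1 has_vector_derivative f2 t) (at t)"
    and "\<And>t. t \<in> {p..q} \<Longrightarrow> (f2 has_vector_derivative f3 t) (at t)"
    and "\<And>t. t \<in> {p..q} \<Longrightarrow> f3 t \<in> P"
    and kernel: "\<And>a. p < a \<Longrightarrow> a < q \<Longrightarrow> 0 \<le> \<alpha> * (u - a)\<^sup>2 + \<beta> * (v - a)\<^sup>2 + \<gamma> * (w - a)\<^sup>2"
  defines "R \<equiv> taylor2_remainder f f1 f2"
  shows "(\<alpha> *\<^sub>R R p u + \<beta> *\<^sub>R R p v + \<gamma> *\<^sub>R R p w) - (\<alpha> *\<^sub>R R q u + \<beta> *\<^sub>R R q v + \<gamma> *\<^sub>R R q w) \<in> P"
proof -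
  define G where "G a = - (\<alpha> *\<^sub>R R a u + \<beta> *\<^sub>R R a v + \<gamma> *\<^sub>R R a w)" for a
  define G' where "G' a = ((\<alpha> * (u - a)\<^sup>2 + \<beta> * (v - a)\<^sup>2 + \<gamma> * (w - a)\<^sup>2) / 2) *\<^sub>R f3 a" for a
  have G: "(G has_vector_derivative G' a) (at a)" if "a \<in> {p..q}" for a
  proof -
    have "((\<lambda>a. R a t) has_vector_derivative - (((t - a)\<^sup>2 / 2) *\<^sub>R f3 a)) (at a)" for t
      unfolding R_def using that by (intro has_vector_derivative_taylor2_remainder assms(2-4))
    then have "(G has_vector_derivative - (\<alpha> *\<^sub>R - (((u - a)\<^sup>2 / 2) *\<^sub>R f3 a)
        + \<beta> *\<^sub>R - (((v - a)\<^sup>2 / 2) *\<^sub>R f3 a) + \<gamma> *\<^sub>R - (((w - a)\<^sup>2 / 2) *\<^sub>R f3 a))) (at a)"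
      unfolding G_def
      by (intro has_vector_derivative_minus has_vector_derivative_add
          bounded_linear.has_vector_derivative[OF bounded_linear_scaleR_right])
    then show ?thesis
      by (simp add: G'_def algebra_simps add_divide_distrib)
  qed
  have "G q - G p \<in> P"
  proof (rule increment_in_cone[OF \<open>p < q\<close>])
    show "continuous_on {p..q} G"
      using G by (intro continuous_at_imp_continuous_on)
        (blast intro: has_vector_derivative_continuous)
    show "(G has_vector_derivative G' t) (at t)" "G' t \<in> P" if "p < t" "t < q" for t
      using that G kernel[OF that] assms(5) by (auto simp: G'_def intro!: ordered_cone_scaleR)
  qed
  then show ?thesis
    by (simp add: G_def algebra_simps)
qed

text \<open>The remainder \<open>R x0\<close> has the same third divided difference as \<open>f\<close> and vanishes at
  \<open>x0\<close>. Moving the base point from \<open>x0\<close> to \<open>x3\<close> through \<open>x1\<close> and \<open>x2\<close>, and dropping at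
  each node the remainder that has become zero there, splits the divided difference into
  three increments; on each of them the Peano kernel of the remaining nodes is nonnegative.\<close>
lemma divdiff3_in_cone_of_third_derivative:
  fixes f f1 f2 f3 :: "real \<Rightarrow> 'a"
  assumes x: "x0 < x1" "x1 < x2" "x2 < x3"
    and der: "\<And>t. t \<in> {x0..x3} \<Longrightarrow> (f has_vector_derivative f1 t) (at t)"
      "\<And>t. t \<in> {x0..x3} \<Longrightarrow> (f1 has_vector_derivative f2 t) (at t)"
      "\<And>t. t \<in> {x0..x3} \<Longrightarrow> (f2 has_vector_derivative f3 t) (at t)"
    and pos: "\<And>t. t \<in> {x0..x3} \<Longrightarrow> f3 t \<in> P"
  shows "divdiff3 f x0 x1 x2 x3 \<in> P"
proof -
  define c1 where "c1 = 1 / ((x1 - x0) * (x1 - x2) * (x1 - x3))"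
  define c2 where "c2 = 1 / ((x2 - x0) * (x2 - x1) * (x2 - x3))"
  define c3 where "c3 = 1 / ((x3 - x0) * (x3 - x1) * (x3 - x2))"
  let ?R = "taylor2_remainder f f1 f2"
  have dist: "distinct [x0, x1, x2, x3]"
    using x by auto
  have "divdiff3 f x0 x1 x2 x3 = divdiff3 (?R x0) x0 x1 x2 x3"
    by (rule divdiff3_taylor2_remainder[OF dist, symmetric])
  also have "\<dots> = c1 *\<^sub>R ?R x0 x1 + c2 *\<^sub>R ?R x0 x2 + c3 *\<^sub>R ?R x0 x3"
    by (simp add: divdiff3_def c1_def c2_def c3_def)
  finally have dd: "divdiff3 f x0 x1 x2 x3 = c1 *\<^sub>R ?R x0 x1 + c2 *\<^sub>R ?R x0 x2 + c3 *\<^sub>R ?R x0 x3" .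
  have "c3 > 0"
    using x by (simp add: c3_def)
  have sub: "{x0..x1} \<subseteq> {x0..x3}" "{x1..x2} \<subseteq> {x0..x3}" "{x2..x3} \<subseteq> {x0..x3}"
    using x by auto
  have T0: "(c1 *\<^sub>R ?R x0 x1 + c2 *\<^sub>R ?R x0 x2 + c3 *\<^sub>R ?R x0 x3)
      - (c1 *\<^sub>R ?R x1 x1 + c2 *\<^sub>R ?R x1 x2 + c3 *\<^sub>R ?R x1 x3) \<in> P"
    using divdiff3_kernel_left_nonneg[OF x] sub(1) x
    by (intro taylor2_remainder_combination_increment[where ?f3.0 = f3] der pos)
      (auto simp: c1_def c2_def c3_def)
  have T1: "(0 *\<^sub>R ?R x1 x1 + c2 *\<^sub>R ?R x1 x2 + c3 *\<^sub>R ?R x1 x3)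
      - (0 *\<^sub>R ?R x2 x1 + c2 *\<^sub>R ?R x2 x2 + c3 *\<^sub>R ?R x2 x3) \<in> P"
    using divdiff3_kernel_middle_nonneg[OF x] sub(2) x
    by (intro taylor2_remainder_combination_increment[where ?f3.0 = f3] der pos)
      (auto simp: c2_def c3_def)
  have T2: "(0 *\<^sub>R ?R x2 x1 + 0 *\<^sub>R ?R x2 x2 + c3 *\<^sub>R ?R x2 x3)
      - (0 *\<^sub>R ?R x3 x1 + 0 *\<^sub>R ?R x3 x2 + c3 *\<^sub>R ?R x3 x3) \<in> P"
    using \<open>c3 > 0\<close> sub(3) x
    by (intro taylor2_remainder_combination_increment[where ?f3.0 = f3] der pos) auto
  have "(c1 *\<^sub>R ?R x0 x1 + c2 *\<^sub>R ?R x0 x2 + c3 *\<^sub>R ?R x0 x3 - (c2 *\<^sub>R ?R x1 x2 + c3 *\<^sub>R ?R x1 x3))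
      + (c2 *\<^sub>R ?R x1 x2 + c3 *\<^sub>R ?R x1 x3 - c3 *\<^sub>R ?R x2 x3) + c3 *\<^sub>R ?R x2 x3 \<in> P"
    by (intro ordered_cone_add) (use T0 T1 T2 in simp_all)
  then show ?thesis
    unfolding dd by simp
qed

lemma three_convex_on_of_third_derivative:
  fixes f f1 f2 f3 :: "real \<Rightarrow> 'a"
  assumes I: "is_interval I" and "continuous_on I f"
    and der: "\<And>t. t \<in> interior I \<Longrightarrow> (f has_vector_derivative f1 t) (at t)"
      "\<And>t. t \<in> interior I \<Longrightarrow> (f1 has_vector_derivative f2 t) (at t)"
      "\<And>t. t \<in> interior I \<Longrightarrow> (f2 has_vector_derivative f3 t) (at t)"
    and pos: "\<And>t. t \<in> interior I \<Longrightarrow> f3 t \<in> P"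
  shows "three_convex_on P I f"
  unfolding three_convex_on_def
proof (intro allI impI, elim conjE)
  fix x0 x1 x2 x3 assume "x0 \<in> I" "x1 \<in> I" "x2 \<in> I" "x3 \<in> I" and x: "x0 < x1" "x1 < x2" "x2 < x3"
  have sub: "{x0..x3} \<subseteq> I"
    using is_interval_1_between[OF I \<open>x0 \<in> I\<close> \<open>x3 \<in> I\<close>] by auto
  then have inner: "{x0<..<x3} \<subseteq> interior I"
    using interior_mono[OF sub] by simp
  have cont: "continuous_on {x0..x3} f"
    using sub by (rule continuous_on_subset[OF assms(2)])
  show "divdiff3 f x0 x1 x2 x3 \<in> P"
  proof (rule ordered_cone_tendsto)
    have near: "eventually (\<lambda>s. 0 < s \<and> x0 + s < x1 \<and> x2 < x3 - s) (at_right 0)"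
      using x by (auto simp: eventually_at_right_field intro!: exI[of _ "min (x1 - x0) (x3 - x2)"])
    then show "eventually (\<lambda>s. divdiff3 f (x0 + s) x1 x2 (x3 - s) \<in> P) (at_right 0)"
    proof eventually_elim
      case (elim s)
      then have "{x0 + s..x3 - s} \<subseteq> interior I"
        using inner x by auto
      then show ?case
        using elim x
        by (intro divdiff3_in_cone_of_third_derivative
            [where ?f1.0 = f1 and ?f2.0 = f2 and ?f3.0 = f3] der pos) auto
    qed
    have ends: "((\<lambda>s. x0 + s) \<longlongrightarrow> x0) (at_right 0)" "((\<lambda>s. x3 - s) \<longlongrightarrow> x3) (at_right 0)"
      by (auto intro!: tendsto_eq_intros)
    moreover have "((\<lambda>s. f (x0 + s)) \<longlongrightarrow> f x0) (at_right 0)" "((\<lambda>s. f (x3 - s)) \<longlongrightarrow> f x3) (at_right 0)"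
      using near x
      by (auto intro!: continuous_on_tendsto_compose[OF cont] ends elim: eventually_mono)
    ultimately show "((\<lambda>s. divdiff3 f (x0 + s) x1 x2 (x3 - s))
        \<longlongrightarrow> divdiff3 f x0 x1 x2 x3) (at_right 0)"
      unfolding divdiff3_def using x by (intro tendsto_intros) auto
  qed
qed

lemma divdiff2_in_cone_of_three_convex_on:
  fixes g g' :: "real \<Rightarrow> 'a"
  assumes J: "open J" "is_interval J" and three_convex: "three_convex_on P J g"
    and der: "\<And>t. t \<in> J \<Longrightarrow> (g has_vector_derivative g' t) (at t)"
    and y: "y0 \<in> J" "y2 \<in> J" "y0 < y1" "y1 < y2"
  shows "divdiff2 g' y0 y1 y2 \<in> P"
proof (rule ordered_cone_tendsto)
  note between = is_interval_1_between[OF J(2) y(1,2)]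
  obtain e where "e > 0" "ball y2 e \<subseteq> J"
    using J(1) y(2) openE by blast
  have "eventually (\<lambda>h. 0 < h \<and> h < e \<and> y0 + h < y1 \<and> y1 + h < y2) (at_right 0)"
    using y \<open>e > 0\<close>
    by (auto simp: eventually_at_right_field intro!: exI[of _ "min e (min (y1 - y0) (y2 - y1))"])
  then show "eventually (\<lambda>h.
      (1 / h) *\<^sub>R (divdiff2 g (y0 + h) (y1 + h) (y2 + h) - divdiff2 g y0 y1 y2) \<in> P) (at_right 0)"
  proof eventually_elim
    case (elim h)
    have "y2 + h \<in> J"
      using elim \<open>ball y2 e \<subseteq> J\<close> by (auto simp: dist_norm)
    moreover have "y0 + h \<in> J" "y1 \<in> J" "y1 + h \<in> J"
      using elim y by (auto intro: between)
    ultimately have "divdiff3 g y0 (y0 + h) y1 y2 \<in> P" "divdiff3 g (y0 + h) y1 (y1 + h) y2 \<in> P"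
      "divdiff3 g (y0 + h) (y1 + h) y2 (y2 + h) \<in> P"
      using three_convex elim y unfolding three_convex_on_def by auto
    then show ?case
      using elim by (simp add: divdiff2_shift ordered_cone_add)
  qed
  show "((\<lambda>h. (1 / h) *\<^sub>R (divdiff2 g (y0 + h) (y1 + h) (y2 + h) - divdiff2 g y0 y1 y2))
      \<longlongrightarrow> divdiff2 g' y0 y1 y2) (at_right 0)"
    using y by (intro divdiff2_shift_quotient_tendsto der between) auto
qed

lemma divdiff1_in_cone_of_divdiff2:
  fixes g g' :: "real \<Rightarrow> 'a"
  assumes J: "open J" "is_interval J"
    and divdiff2_pos: "\<And>y0 y1 y2. y0 \<in> J \<Longrightarrow> y2 \<in> J \<Longrightarrow> y0 < y1 \<Longrightarrow> y1 < y2 \<Longrightarrow>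
      divdiff2 g y0 y1 y2 \<in> P"
    and der: "\<And>t. t \<in> J \<Longrightarrow> (g has_vector_derivative g' t) (at t)"
    and z: "z0 \<in> J" "z1 \<in> J" "z0 < z1"
  shows "divdiff1 g' z0 z1 \<in> P"
proof (rule ordered_cone_tendsto)
  obtain e where "e > 0" "ball z1 e \<subseteq> J"
    using J(1) z(2) openE by blast
  have "eventually (\<lambda>h. 0 < h \<and> h < e \<and> z0 + h < z1) (at_right 0)"
    using z \<open>e > 0\<close> by (auto simp: eventually_at_right_field intro!: exI[of _ "min e (z1 - z0)"])
  then show "eventually (\<lambda>h. (1 / h) *\<^sub>R (divdiff1 g (z0 + h) (z1 + h) - divdiff1 g z0 z1) \<in> P)
      (at_right 0)"
  proof eventually_elim
    case (elim h)
    have "z1 + h \<in> J"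
      using elim \<open>ball z1 e \<subseteq> J\<close> by (auto simp: dist_norm)
    moreover have "z0 + h \<in> J"
      using elim z by (auto intro: is_interval_1_between[OF J(2) z(1,2)])
    ultimately have "divdiff2 g z0 (z0 + h) z1 \<in> P" "divdiff2 g (z0 + h) z1 (z1 + h) \<in> P"
      using elim z by (auto intro: divdiff2_pos)
    then show ?case
      using elim by (simp add: divdiff1_shift ordered_cone_add)
  qed
  show "((\<lambda>h. (1 / h) *\<^sub>R (divdiff1 g (z0 + h) (z1 + h) - divdiff1 g z0 z1))
      \<longlongrightarrow> divdiff1 g' z0 z1) (at_right 0)"
    using z by (intro divdiff1_shift_quotient_tendsto der)
qed

lemma derivative_in_cone_of_divdiff1:
  fixes g :: "real \<Rightarrow> 'a"
  assumes "open J"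
    and divdiff1_pos: "\<And>z0 z1. z0 \<in> J \<Longrightarrow> z1 \<in> J \<Longrightarrow> z0 < z1 \<Longrightarrow> divdiff1 g z0 z1 \<in> P"
    and "t \<in> J" "(g has_vector_derivative v) (at t)"
  shows "v \<in> P"
proof (rule ordered_cone_tendsto)
  obtain e where "e > 0" "ball t e \<subseteq> J"
    using assms(1,3) openE by blast
  have "eventually (\<lambda>h. 0 < h \<and> h < e) (at_right 0)"
    using \<open>e > 0\<close> by (auto simp: eventually_at_right_field)
  then show "eventually (\<lambda>h. (1 / h) *\<^sub>R (g (t + h) - g t) \<in> P) (at_right 0)"
  proof eventually_elim
    case (elim h)
    then have "t + h \<in> J"
      using \<open>ball t e \<subseteq> J\<close> by (auto simp: dist_norm)
    then have "divdiff1 g t (t + h) \<in> P"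
      using divdiff1_pos \<open>t \<in> J\<close> elim by simp
    then show ?case
      by (simp add: divdiff1_def algebra_simps)
  qed
  show "((\<lambda>h. (1 / h) *\<^sub>R (g (t + h) - g t)) \<longlongrightarrow> v) (at_right 0)"
    using assms(4) by (rule has_vector_derivative_right_quotient)
qed

end

theorem theorem10:
  fixes P :: "'a::banach set" and I :: "real set" and f f1 f2 f3 :: "real \<Rightarrow> 'a"
  assumes "ordered_banach_cone P"
    and "is_interval I"
    and "continuous_on I f"
    and "\<And>t. t \<in> interior I \<Longrightarrow> (f has_vector_derivative f1 t) (at t)"
    and "\<And>t. t \<in> interior I \<Longrightarrow> (f1 has_vector_derivative f2 t) (at t)"
    and "\<And>t. t \<in> interior I \<Longrightarrow> (f2 has_vector_derivative f3 t) (at t)"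
  shows "three_convex_on P I f \<longleftrightarrow> (\<forall>t \<in> interior I. f3 t \<in> P)"
proof
  assume "\<forall>t \<in> interior I. f3 t \<in> P"
  then show "three_convex_on P I f"
    using assms by (intro three_convex_on_of_third_derivative) auto
next
  assume "three_convex_on P I f"
  then have three_convex_interior: "three_convex_on P (interior I) f"
    unfolding three_convex_on_def using interior_subset by blast
  have J: "open (interior I)" "is_interval (interior I)"
    using assms(2) by (simp_all add: is_interval_convex_1)
  have D2: "divdiff2 f1 y0 y1 y2 \<in> P"
    if "y0 \<in> interior I" "y2 \<in> interior I" "y0 < y1" "y1 < y2" for y0 y1 y2
    by (rule divdiff2_in_cone_of_three_convex_on[OF assms(1) J three_convex_interior assms(4) that])
  have D1: "divdiff1 f2 z0 z1 \<in> P" if "z0 \<in> interior I" "z1 \<in> interior I" "z0 < z1" for z0 z1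
    by (rule divdiff1_in_cone_of_divdiff2[OF assms(1) J D2 assms(5) that])
  show "\<forall>t \<in> interior I. f3 t \<in> P"
  proof
    fix t assume t: "t \<in> interior I"
    show "f3 t \<in> P"
      by (rule derivative_in_cone_of_divdiff1[OF assms(1) J(1) D1 t assms(6)[OF t]])
  qed
qed

end
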